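(* In the setting described in the context, the mapping $\psi^a$ is a monotone $\gamma$-CRS with regards to $h$.
   Context: Let $I=\{1,\dots,n\}$ be a set of items, $B$ a positive integer, $[B]=\{1,\dots,B\}$, $[0;B]=\{0,1,\dots,B\}$; for $u,w\in[0;B]^I$, $u\le w$ means coordinatewise. Let $f:[0;B]^I\to\mathbb{R}_{\ge0}$ be monotone and lattice submodular ($f(u\vee s\mathbf{1}_i)-f(u)\ge f(w\vee s\mathbf{1}_i)-f(w)$ for all $u\le w$, $s\in[0;B]$, $i\in I$, with $\vee$ the coordinatewise max and $\mathbf{1}_i$ the $i$-th unit vector). Each item $i$ has a random state $\Phi(i)\in[B]$, independent across items, with known distribution $p_i(s)=\Pr[\Phi(i)=s]$. Item $i$ in state $s$ has a nonnegative integer cost $c_i(s)$, with $c_i(s)\ge c_i(s')$ whenever $s\ge s'$. $C$ is a positive integer budget and $\mathcal{I}^{out}\subseteq 2^I$ is a downward-closed family. For $S\subseteq I$ and a realization $\phi\in[B]^I$, $\phi_S\in[0;B]^I$ equals $\phi(i)$ for $i\in S$ and $0$ otherwise; $\overline{f}(S)=\mathbb{E}[f(\Phi_S)]$, and $F(\overline{x})=\sum_{U\subseteq I}\prod_{i\in U}\overline{x}(i)\prod_{i\notin U}(1-\overline{x}(i))\overline{f}(U)$ is the multilinear extension. Let $P_{\mathcal{I}^{out}}=\mathrm{conv}\{\mathbf{1}_S: S\in\mathcal{I}^{out}\}$. (β,γ)-balanced CRS: for $\beta,\gamma\in[0,1]$, a monotone $(\beta,\gamma)$-balanced CRS for $\mathcal{I}^{out}$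 is a (possibly randomized) scheme that, for any $\overline{z}\in\beta\cdot P_{\mathcal{I}^{out}}$ and the random set $R$ containing each $i$ independently with probability $\overline{z}(i)$, maps $R$ to $\chi(R)\subseteq R$ with $\chi(R)\in\mathcal{I}^{out}$, such that $\Pr[i\in\chi(R)\mid i\in R]\ge\gamma$ for all $i$ (probability over $R$ and the scheme's randomness), and monotone: for $i\in R\subseteq R'$, $\Pr[i\in\chi(R)]\ge\Pr[i\in\chi(R')]$. Problem P1: variables $x(i,t)\ge0$ for $i\in I$, $t\in\{1,\dots,C-c_i(B)\}$, with $\overline{x}(i)=\sum_{t=1}^{C-c_i(B)}x(i,t)$; maximize $F(\overline{x})$ subject to $\overline{x}(i)\le1$, $\overline{x}\in P_{\mathcal{I}^{out}}$, and for all $t\in\{1,\dots,C\}$: $\sum_{i\in I}\mathbb{E}[\min\{c_i(\Phi(i)),t\}]\sum_{t'=1}^{t}x(i,t')\le 2t$. Assume a monotone $(\beta,\gamma)$-balanced CRS $\chi^{io}$ for $\mathcal{I}^{out}$ exists. Let $y$ be the solution of P1 computed by the stochastic continuous greedy algorithm of Asadpour and Nazerzadeh (2016) with stopping time $l=\min\{\beta,1/4\}$ and step size $\delta=o(n^{-3})$, with $\overline{y}(i)=\sum_t y(i,t)$. Distribution $h$: the random vector $v\in[0;B]^I$ has independent coordinates with $\Pr[v(i)=j]=h(i,j)=p_i(j)\overline{y}(i)$ for $j\in[B]$ and $\Pr[v(i)=0]=h(i,0)=1-\overline{y}(i)$. Let $R(v)=\{i: v(i)\ne0\}$. Mapping $\psi^a$: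 apply $\chi^{io}$ (with $\overline{z}=\overline{y}$) to $R(v)$; set $\psi^a(v)(i)=v(i)$ if $i\in\chi^{io}(R(v))$ and $\psi^a(v)(i)=0$ otherwise. An $\alpha$-CRS with regards to $h$ is a (possibly randomized) mapping $\psi$ on $[0;B]^I$ with $\psi(v)(i)\in\{0,v(i)\}$ for all $i$, and $\Pr[\psi(v)(i)=j\mid v(i)=j]\ge\alpha$ for all $i\in I$, $j\in[B]$ (probability over $v\sim h$ and the randomness of $\psi$). It is monotone if for all $u,w$ with $u(i)=w(i)$ and $u\le w$, $\Pr[\psi(u)(i)=u(i)]\ge\Pr[\psi(w)(i)=w(i)]$ (probability over the randomness of $\psi$ only). *)

theory Defs
  imports "HOL-Probability.Probability"
begin

(* P_{I^out} = conv { 1_S : S \<in> F }, written out as the set of convex combinations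
   of the indicator vectors of the (finitely many) members of F. *)
definition indep_polytope :: "'a set \<Rightarrow> 'a set set \<Rightarrow> ('a \<Rightarrow> real) set" where
  "indep_polytope I F = {x. \<exists>c :: 'a set \<Rightarrow> real.
      (\<forall>S\<in>F. c S \<ge> 0) \<and> (\<Sum>S\<in>F. c S) = 1 \<and>
      x = (\<lambda>i. \<Sum>S\<in>F. c S * (if i \<in> S then 1 else 0))}"

definition scaled_polytope :: "real \<Rightarrow> ('a \<Rightarrow> real) set \<Rightarrow> ('a \<Rightarrow> real) set" where
  "scaled_polytope b P = {(\<lambda>i. b * x i) | x. x \<in> P}"

definition indep_random_set :: "'a set \<Rightarrow> ('a \<Rightarrow> real) \<Rightarrow> 'a set pmf" where
  "indep_random_set I z =
     map_pmf (\<lambda>b. {i\<in>I. b i}) (Pi_pmf I False (\<lambda>i. bernoulli_pmf (z i)))"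

definition downward_closed :: "'a set set \<Rightarrow> bool" where
  "downward_closed F \<longleftrightarrow> (\<forall>S\<in>F. \<forall>T. T \<subseteq> S \<longrightarrow> T \<in> F)"

(* chi z R : the (randomized) output of the scheme, as a distribution over subsets,
   when run with parameter vector z on the set R. *)
definition monotone_balanced_CRS ::
  "'a set \<Rightarrow> 'a set set \<Rightarrow> real \<Rightarrow> real \<Rightarrow> (('a \<Rightarrow> real) \<Rightarrow> 'a set \<Rightarrow> 'a set pmf) \<Rightarrow> bool" where
  "monotone_balanced_CRS I F \<beta> \<gamma> chi \<longleftrightarrow>
     (\<forall>z \<in> scaled_polytope \<beta> (indep_polytope I F).
        (\<forall>R. R \<subseteq> I \<longrightarrow> (\<forall>S \<in> set_pmf (chi z R). S \<subseteq> R \<and> S \<in> F)) \<and>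
        (\<forall>i\<in>I. measure_pmf.prob (bind_pmf (indep_random_set I z) (\<lambda>R. map_pmf (\<lambda>S. (R, S)) (chi z R)))
                   {(R, S). i \<in> S \<and> i \<in> R}
                 \<ge> \<gamma> * measure_pmf.prob (indep_random_set I z) {R. i \<in> R}) \<and>
        (\<forall>i R R'. i \<in> R \<longrightarrow> R \<subseteq> R' \<longrightarrow> R' \<subseteq> I \<longrightarrow>
            measure_pmf.prob (chi z R) {S. i \<in> S} \<ge> measure_pmf.prob (chi z R') {S. i \<in> S}))"

(* [0;B]^I, vectors as functions vanishing outside I *)
definition lattice_dom :: "'a set \<Rightarrow> nat \<Rightarrow> ('a \<Rightarrow> nat) set" where
  "lattice_dom I B = {v. \<forall>i. (i \<in> I \<longrightarrow> v i \<le> B) \<and> (i \<notin> I \<longrightarrow> v i = 0)}"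

(* the distribution h: independent coordinates, Pr[v i = j] = p_i(j) * ybar i for j \<ge> 1,
   Pr[v i = 0] = 1 - ybar i *)
definition h_dist :: "'a set \<Rightarrow> ('a \<Rightarrow> nat pmf) \<Rightarrow> ('a \<Rightarrow> real) \<Rightarrow> ('a \<Rightarrow> nat) pmf" where
  "h_dist I p ybar =
     Pi_pmf I 0 (\<lambda>i. bind_pmf (bernoulli_pmf (ybar i)) (\<lambda>b. if b then p i else return_pmf 0))"

definition CRS_wrt :: "'a set \<Rightarrow> nat \<Rightarrow> ('a \<Rightarrow> nat) pmf \<Rightarrow> real \<Rightarrow> (('a \<Rightarrow> nat) \<Rightarrow> ('a \<Rightarrow> nat) pmf) \<Rightarrow> bool" where
  "CRS_wrt I B h \<alpha> \<psi> \<longleftrightarrow>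
     (\<forall>v \<in> lattice_dom I B. \<forall>w \<in> set_pmf (\<psi> v). \<forall>i. w i = 0 \<or> w i = v i) \<and>
     (\<forall>i\<in>I. \<forall>j\<in>{1..B}.
        measure_pmf.prob (bind_pmf h (\<lambda>v. map_pmf (\<lambda>w. (v, w)) (\<psi> v))) {(v, w). w i = j \<and> v i = j}
          \<ge> \<alpha> * measure_pmf.prob h {v. v i = j})"

definition monotone_CRS :: "'a set \<Rightarrow> nat \<Rightarrow> (('a \<Rightarrow> nat) \<Rightarrow> ('a \<Rightarrow> nat) pmf) \<Rightarrow> bool" where
  "monotone_CRS I B \<psi> \<longleftrightarrow>
     (\<forall>u \<in> lattice_dom I B. \<forall>w \<in> lattice_dom I B. \<forall>i \<in> I.
        u i = w i \<longrightarrow> (\<forall>k. u k \<le> w k) \<longrightarrow>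
        measure_pmf.prob (\<psi> u) {x. x i = u i} \<ge> measure_pmf.prob (\<psi> w) {x. x i = w i})"

definition psi_a :: "'a set \<Rightarrow> (('a \<Rightarrow> real) \<Rightarrow> 'a set \<Rightarrow> 'a set pmf) \<Rightarrow> ('a \<Rightarrow> real)
                      \<Rightarrow> ('a \<Rightarrow> nat) \<Rightarrow> ('a \<Rightarrow> nat) pmf" where
  "psi_a I chi ybar v =
     map_pmf (\<lambda>S i. if i \<in> S then v i else 0) (chi ybar {i\<in>I. v i \<noteq> 0})"

end

theory Submission
  imports Defs
begin

(* Sample v from h by first tossing independent coins b k with bias ybar k and then
   drawing, for every k whose coin shows heads, a state from p k. States are nonzero, so
   R(v) is exactly the set of heads, which is distributed like the random set R fed to
   chi; moreover, given the coins, v i = j (j > 0) has probability [b i] * p_i(j).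
   Hence both Pr[psi(v) i = j, v i = j] and Pr[v i = j] are p_i(j) times the corresponding
   probabilities for chi, and gamma-balancedness carries over. Monotonicity is inherited
   because u <= w with u i = w i > 0 gives i in R(u), R(u) a subset of R(w).
   Finally chi applies to ybar since min beta (1/4) * P is contained in beta * P,
   P being convex and containing 0 (the empty set lies in the downward closed F). *)

lemma emeasure_bind_pmf_Pair:
  "emeasure (bind_pmf M (\<lambda>x. map_pmf (Pair x) (N x))) {(x, w). Q x w \<and> P x}
     = (\<integral>\<^sup>+x. indicator {x. P x} x * emeasure (N x) {w. Q x w} \<partial>M)"
  by (auto intro!: nn_integral_cong simp: emeasure_map_pmf vimage_def split: split_indicator)

lemma h_dist_conv_bind_coins:
  assumes "finite I"
  shows "h_dist I p y =
    bind_pmf (Pi_pmf I False (\<lambda>k. bernoulli_pmf (y k)))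
      (\<lambda>b. Pi_pmf I 0 (\<lambda>k. if b k then p k else return_pmf 0))"
  unfolding h_dist_def using assms by (rule Pi_pmf_bind)

lemma nonzero_coords_masked_Pi_pmf:
  assumes "finite I" and "\<And>k. k \<in> I \<Longrightarrow> 0 \<notin> set_pmf (p k)"
    and "v \<in> set_pmf (Pi_pmf I 0 (\<lambda>k. if b k then p k else return_pmf 0))"
  shows "{k\<in>I. v k \<noteq> (0::nat)} = {k\<in>I. b k}"
proof -
  have "v k \<in> set_pmf (if b k then p k else return_pmf 0)" if "k \<in> I" for k
    using assms(1,3) that by (auto simp: set_Pi_pmf PiE_dflt_def)
  then show ?thesis
    using assms(2) by (metis (mono_tags, lifting) set_return_pmf singletonD)
qed

lemma emeasure_masked_Pi_pmf_coordinate: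
  assumes "finite I" and "i \<in> I" and "j \<noteq> 0"
  shows "emeasure (Pi_pmf I 0 (\<lambda>k. if b k then p k else return_pmf 0)) {v. v i = j}
           = indicator {b. b i} b * ennreal (pmf (p i) j)"
proof -
  have "emeasure (Pi_pmf I 0 (\<lambda>k. if b k then p k else return_pmf 0)) {v. v i = j}
         = emeasure (map_pmf (\<lambda>v. v i) (Pi_pmf I 0 (\<lambda>k. if b k then p k else return_pmf 0))) {j}"
    by (simp add: emeasure_map_pmf vimage_def)
  also have "\<dots> = emeasure (if b i then p i else return_pmf 0) {j}"
    using assms by (simp add: Pi_pmf_component)
  finally show ?thesis
    using assms(3) by (simp add: emeasure_pmf_single)
qed

lemma nn_integral_h_dist_nonzero_coords:
  assumes "finite I" and "i \<in> I" and "j \<noteq> 0" and "\<And>k. k \<in> I \<Longrightarrow> 0 \<notin> set_pmf (p k)"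
  shows "(\<integral>\<^sup>+v. indicator {v. v i = j} v * G {k\<in>I. v k \<noteq> 0} \<partial>h_dist I p y)
           = ennreal (pmf (p i) j) * (\<integral>\<^sup>+R. indicator {R. i \<in> R} R * G R \<partial>indep_random_set I y)"
proof -
  let ?coins = "Pi_pmf I False (\<lambda>k. bernoulli_pmf (y k))"
  let ?M = "\<lambda>b. Pi_pmf I 0 (\<lambda>k. if b k then p k else return_pmf 0)"
  have "(\<integral>\<^sup>+v. indicator {v. v i = j} v * G {k\<in>I. v k \<noteq> 0} \<partial>h_dist I p y)
         = (\<integral>\<^sup>+b. \<integral>\<^sup>+v. G {k\<in>I. b k} * indicator {v. v i = j} v \<partial>?M b \<partial>?coins)"
    using assms by (auto simp: h_dist_conv_bind_coins mult.commute AE_measure_pmf_iff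
        dest!: nonzero_coords_masked_Pi_pmf[rotated 2] intro!: nn_integral_cong nn_integral_cong_AE)
  also have "\<dots> = (\<integral>\<^sup>+b. G {k\<in>I. b k} * (indicator {b. b i} b * ennreal (pmf (p i) j)) \<partial>?coins)"
    using assms by (simp add: nn_integral_cmult emeasure_masked_Pi_pmf_coordinate)
  also have "\<dots> = ennreal (pmf (p i) j) * (\<integral>\<^sup>+R. indicator {R. i \<in> R} R * G R \<partial>indep_random_set I y)"
    using assms(2) by (auto simp: indep_random_set_def nn_integral_cmult[symmetric] mult_ac
        intro!: nn_integral_cong split: split_indicator)
  finally show ?thesis .
qed

lemma prob_h_dist_coordinate:
  assumes "finite I" and "i \<in> I" and "j \<noteq> 0" and "\<And>k. k \<in> I \<Longrightarrow> 0 \<notin> set_pmf (p k)"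
  shows "measure_pmf.prob (h_dist I p y) {v. v i = j}
           = pmf (p i) j * measure_pmf.prob (indep_random_set I y) {R. i \<in> R}"
proof -
  have "emeasure (h_dist I p y) {v. v i = j}
          = ennreal (pmf (p i) j) * emeasure (indep_random_set I y) {R. i \<in> R}"
    using nn_integral_h_dist_nonzero_coords[OF assms, where G = "\<lambda>_. 1" and y = y] by simp
  then show ?thesis
    by (simp add: measure_pmf.emeasure_eq_measure flip: ennreal_mult)
qed

lemma prob_psi_a_keeps_coordinate:
  assumes "finite I" and "i \<in> I" and "j \<noteq> 0" and "\<And>k. k \<in> I \<Longrightarrow> 0 \<notin> set_pmf (p k)"
  shows "measure_pmf.prob (bind_pmf (h_dist I p y) (\<lambda>v. map_pmf (\<lambda>w. (v, w)) (psi_a I chi y v)))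
             {(v, w). w i = j \<and> v i = j}
           = pmf (p i) j * measure_pmf.prob (bind_pmf (indep_random_set I y) (\<lambda>R. map_pmf (\<lambda>S. (R, S)) (chi y R)))
             {(R, S). i \<in> S \<and> i \<in> R}"
proof -
  let ?G = "\<lambda>R. emeasure (chi y R) {S. i \<in> S}"
  have "emeasure (psi_a I chi y v) {w. w i = j} = ?G {k\<in>I. v k \<noteq> 0}" if "v i = j" for v
    using that assms(3) by (simp add: psi_a_def emeasure_map_pmf vimage_def)
  then have "emeasure (bind_pmf (h_dist I p y) (\<lambda>v. map_pmf (\<lambda>w. (v, w)) (psi_a I chi y v)))
               {(v, w). w i = j \<and> v i = j}
          = (\<integral>\<^sup>+v. indicator {v. v i = j} v * ?G {k\<in>I. v k \<noteq> 0} \<partial>h_dist I p y)"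
    by (auto simp: emeasure_bind_pmf_Pair intro!: nn_integral_cong split: split_indicator)
  also have "\<dots> = ennreal (pmf (p i) j)
      * emeasure (bind_pmf (indep_random_set I y) (\<lambda>R. map_pmf (\<lambda>S. (R, S)) (chi y R))) {(R, S). i \<in> S \<and> i \<in> R}"
    unfolding emeasure_bind_pmf_Pair by (rule nn_integral_h_dist_nonzero_coords[OF assms])
  finally show ?thesis
    by (simp add: measure_pmf.emeasure_eq_measure flip: ennreal_mult)
qed

lemma psi_a_CRS_wrt:
  assumes "finite I" and "\<And>k. k \<in> I \<Longrightarrow> 0 \<notin> set_pmf (p k)"
    and "monotone_balanced_CRS I F \<beta> \<gamma> chi" and "y \<in> scaled_polytope \<beta> (indep_polytope I F)"
  shows "CRS_wrt I B (h_dist I p y) \<gamma> (psi_a I chi y)"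
proof -
  have keeps_coordinate: "\<gamma> * measure_pmf.prob (h_dist I p y) {v. v i = j}
      \<le> measure_pmf.prob (bind_pmf (h_dist I p y) (\<lambda>v. map_pmf (\<lambda>w. (v, w)) (psi_a I chi y v)))
           {(v, w). w i = j \<and> v i = j}"
    if i: "i \<in> I" and j: "j \<noteq> 0" for i j
  proof -
    have chi_balanced: "\<gamma> * measure_pmf.prob (indep_random_set I y) {R. i \<in> R}
        \<le> measure_pmf.prob (bind_pmf (indep_random_set I y) (\<lambda>R. map_pmf (\<lambda>S. (R, S)) (chi y R)))
             {(R, S). i \<in> S \<and> i \<in> R}"
      using assms(3,4) i unfolding monotone_balanced_CRS_def by blast
    have "\<gamma> * measure_pmf.prob (h_dist I p y) {v. v i = j}
        = pmf (p i) j * (\<gamma> * measure_pmf.prob (indep_random_set I y) {R. i \<in> R})"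
      using prob_h_dist_coordinate[OF assms(1) i j assms(2)] by simp
    also have "\<dots> \<le> pmf (p i) j * measure_pmf.prob
        (bind_pmf (indep_random_set I y) (\<lambda>R. map_pmf (\<lambda>S. (R, S)) (chi y R))) {(R, S). i \<in> S \<and> i \<in> R}"
      using chi_balanced by (rule mult_left_mono) simp
    also have "\<dots> = measure_pmf.prob
        (bind_pmf (h_dist I p y) (\<lambda>v. map_pmf (\<lambda>w. (v, w)) (psi_a I chi y v))) {(v, w). w i = j \<and> v i = j}"
      using prob_psi_a_keeps_coordinate[OF assms(1) i j assms(2)] by simp
    finally show ?thesis .
  qed
  then show ?thesis
    unfolding CRS_wrt_def by (auto simp: psi_a_def)
qed

lemma psi_a_monotone:
  assumes "monotone_balanced_CRS I F \<beta> \<gamma> chi" and "y \<in> scaled_polytope \<beta> (indep_polytope I F)"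
  shows "monotone_CRS I B (psi_a I chi y)"
proof -
  have chi_monotone: "measure_pmf.prob (chi y R') {S. i \<in> S} \<le> measure_pmf.prob (chi y R) {S. i \<in> S}"
    if "i \<in> R" and "R \<subseteq> R'" and "R' \<subseteq> I" for i R R'
    using assms that unfolding monotone_balanced_CRS_def by blast
  show ?thesis
    unfolding monotone_CRS_def
  proof (intro ballI impI allI)
    fix u w :: "'a \<Rightarrow> nat" and i assume "i \<in> I" and same: "u i = w i" and le: "\<forall>k. u k \<le> w k"
    show "measure_pmf.prob (psi_a I chi y w) {x. x i = w i} \<le> measure_pmf.prob (psi_a I chi y u) {x. x i = u i}"
    proof (cases "u i = 0")
      case True
      then show ?thesis by (simp add: psi_a_def)
    next
      case False
      have "{k\<in>I. u k \<noteq> 0} \<subseteq> {k\<in>I. w k \<noteq> 0}"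
        using le by (auto intro: less_le_trans)
      then have "measure_pmf.prob (chi y {k\<in>I. w k \<noteq> 0}) {S. i \<in> S}
                 \<le> measure_pmf.prob (chi y {k\<in>I. u k \<noteq> 0}) {S. i \<in> S}"
        using False \<open>i \<in> I\<close> by (intro chi_monotone) auto
      then show ?thesis
        using False same by (simp add: psi_a_def vimage_def)
    qed
  qed
qed

lemma indep_polytope_empty_mem:
  assumes "downward_closed F" and "x \<in> indep_polytope I F"
  shows "{} \<in> F"
proof -
  obtain c :: "'a set \<Rightarrow> real" where "(\<Sum>S\<in>F. c S) = 1"
    using assms(2) unfolding indep_polytope_def by blast
  then obtain S where "S \<in> F"
    by fastforce
  then show ?thesis
    using assms(1) unfolding downward_closed_def by blast
qed

lemma indep_polytope_scale:
  assumes "finite F" and "downward_closed F" and "x \<in> indep_polytope I F" and "0 \<le> t" and "t \<le> 1"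
  shows "(\<lambda>i. t * x i) \<in> indep_polytope I F"
proof -
  have "{} \<in> F"
    using assms(2,3) by (rule indep_polytope_empty_mem)
  obtain c where c_nonneg: "\<forall>S\<in>F. c S \<ge> 0" and c_sum: "(\<Sum>S\<in>F. c S) = 1"
    and x: "x = (\<lambda>i. \<Sum>S\<in>F. c S * (if i \<in> S then 1 else 0))"
    using assms(3) unfolding indep_polytope_def by blast
  define c' where "c' S = t * c S + (if S = {} then 1 - t else 0)" for S
  have "(\<Sum>S\<in>F. c' S) = 1"
    using assms(1) \<open>{} \<in> F\<close> c_sum by (simp add: c'_def sum.distrib flip: sum_distrib_left)
  moreover have "t * x i = (\<Sum>S\<in>F. c' S * (if i \<in> S then 1 else 0))" for i
    unfolding x sum_distrib_left by (rule sum.cong) (auto simp: c'_def)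
  moreover have "\<forall>S\<in>F. c' S \<ge> 0"
    using c_nonneg assms(4,5) by (simp add: c'_def)
  ultimately show ?thesis
    unfolding indep_polytope_def by blast
qed

lemma scaled_indep_polytope_mono:
  assumes "finite F" and "downward_closed F" and "0 \<le> a" and "a \<le> b"
  shows "scaled_polytope a (indep_polytope I F) \<subseteq> scaled_polytope b (indep_polytope I F)"
proof
  fix z assume "z \<in> scaled_polytope a (indep_polytope I F)"
  then obtain x where x: "x \<in> indep_polytope I F" and z: "z = (\<lambda>i. a * x i)"
    unfolding scaled_polytope_def by blast
  show "z \<in> scaled_polytope b (indep_polytope I F)"
  proof (cases "b = 0")
    case True
    then show ?thesis
      using assms(3,4) x z unfolding scaled_polytope_def by auto
  next
    case False
    have "(\<lambda>i. (a / b) * x i) \<in> indep_polytope I F"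
      using assms x False by (intro indep_polytope_scale) auto
    moreover have "z = (\<lambda>i. b * ((a / b) * x i))"
      using z False by auto
    ultimately show ?thesis
      unfolding scaled_polytope_def by (blast intro: exI[of _ "\<lambda>i. (a / b) * x i"])
  qed
qed

theorem lemma3:
  fixes I :: "'a set" and F :: "'a set set" and \<beta> \<gamma> :: real and B :: nat
    and p :: "'a \<Rightarrow> nat pmf"
    and chi :: "('a \<Rightarrow> real) \<Rightarrow> 'a set \<Rightarrow> 'a set pmf"
    and ybar :: "'a \<Rightarrow> real"
  assumes "finite I" and "F \<subseteq> Pow I" and "downward_closed F"
    and "0 \<le> \<beta>" and "\<beta> \<le> 1" and "0 \<le> \<gamma>" and "\<gamma> \<le> 1" and "B \<ge> 1"
    and "\<And>i. i \<in> I \<Longrightarrow> set_pmf (p i) \<subseteq> {1..B}"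
    and "monotone_balanced_CRS I F \<beta> \<gamma> chi"
    and "ybar \<in> scaled_polytope (min \<beta> (1/4)) (indep_polytope I F)"
  shows "CRS_wrt I B (h_dist I p ybar) \<gamma> (psi_a I chi ybar) \<and> monotone_CRS I B (psi_a I chi ybar)"
proof -
  have "finite F"
    using assms(1,2) by (meson finite_Pow_iff rev_finite_subset)
  then have "ybar \<in> scaled_polytope \<beta> (indep_polytope I F)"
    using assms(3,4,11) scaled_indep_polytope_mono[of F "min \<beta> (1/4)" \<beta>] by auto
  moreover have "\<And>k. k \<in> I \<Longrightarrow> 0 \<notin> set_pmf (p k)"
    using assms(9) by fastforce
  ultimately show ?thesis
    using psi_a_CRS_wrt[OF assms(1) _ assms(10)] psi_a_monotone[OF assms(10)] by blast
qed

end
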